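(* Consider Algorithm 1 applied to $\min\varphi(w)$ s.t. $w\in D$, assume the inner loop always terminates, and let $\{w^j\}$ be the resulting infinite sequence of outer iterates. Assume that $\varphi$ is bounded from below and uniformly continuous on $\mathcal S_\varphi(w^0):=\{w\in D:\varphi(w)\le\varphi(w^0)\}$. Then $\|w^{j+1}-w^j\|\to0$ as $j\to\infty$.
   Context: $\mathbb W$ is a Euclidean space, $\varphi\colon\mathbb W\to\mathbb R$ continuously differentiable, $D\subset\mathbb W$ nonempty and closed (neither need be convex). Algorithm 1 (general spectral gradient method, without termination test): parameters $\tau>1$, $\sigma\in(0,1)$, $0<\gamma_{\min}\le\gamma_{\max}<\infty$, $m\in\mathbb N$, starting point $w^0\in D$. For $j=0,1,2,\dots$: set $m_j:=\min(j,m)$ and choose $\gamma_j^0\in[\gamma_{\min},\gamma_{\max}]$; for $i=1,2,\dots$ set $\gamma_{j,i}:=\tau^{i-1}\gamma_j^0$ and compute a (global) solution $w^{j,i}$ of $\min_w \varphi(w^j)+\langle\nabla\varphi(w^j),w-w^j\rangle+\frac{\gamma_{j,i}}2\|w-w^j\|^2$ s.t. $w\in D$ (subproblem $Q(j,i)$); the inner loop stops at the first $i$ with $\varphi(w^{j,i})\le\max_{r=0,\dots,m_j}\varphi(w^{j-r})+\sigma\langle\nabla\varphi(w^j),w^{j,i}-w^j\rangle$; then set $i_j:=i$, $\gamma_j:=\gamma_{j,i_j}$, $w^{j+1}:=w^{j,i_j}$. *)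

theory Defs
  imports "HOL-Analysis.Analysis"
begin

definition C1_with_gradient :: "('a::euclidean_space \<Rightarrow> real) \<Rightarrow> ('a \<Rightarrow> 'a) \<Rightarrow> bool" where
  "C1_with_gradient phi g \<longleftrightarrow>
     (\<forall>w. (phi has_derivative (\<lambda>h. inner (g w) h)) (at w)) \<and> continuous_on UNIV g"

definition subproblem_obj :: "('a::euclidean_space \<Rightarrow> real) \<Rightarrow> ('a \<Rightarrow> 'a) \<Rightarrow> 'a \<Rightarrow> real \<Rightarrow> 'a \<Rightarrow> real" where
  "subproblem_obj phi g wj gam w =
     phi wj + inner (g wj) (w - wj) + gam / 2 * (norm (w - wj))\<^sup>2"

definition is_global_solution :: "('a::euclidean_space \<Rightarrow> real) \<Rightarrow> ('a \<Rightarrow> 'a) \<Rightarrow> 'a set \<Rightarrow> 'a \<Rightarrow> real \<Rightarrow> 'a \<Rightarrow> bool" where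
  "is_global_solution phi g D wj gam v \<longleftrightarrow>
     v \<in> D \<and> (\<forall>w\<in>D. subproblem_obj phi g wj gam v \<le> subproblem_obj phi g wj gam w)"

definition accepted :: "('a::euclidean_space \<Rightarrow> real) \<Rightarrow> ('a \<Rightarrow> 'a) \<Rightarrow> real \<Rightarrow> nat \<Rightarrow> (nat \<Rightarrow> 'a) \<Rightarrow> nat \<Rightarrow> 'a \<Rightarrow> bool" where
  "accepted phi g \<sigma> m w j v \<longleftrightarrow>
     phi v \<le> Max ((\<lambda>r. phi (w (j - r))) ` {0..min j m}) + \<sigma> * inner (g (w j)) (v - w j)"

text \<open>The sequence w of outer iterates, together with trial points wt j i (i \<ge> 1),
  initial parameters gam0 j and final inner indices ij j, is generated by Algorithm 1
  (with every inner loop terminating).\<close>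
definition spectral_gradient_run ::
  "('a::euclidean_space \<Rightarrow> real) \<Rightarrow> ('a \<Rightarrow> 'a) \<Rightarrow> 'a set \<Rightarrow> real \<Rightarrow> real \<Rightarrow> real \<Rightarrow> real \<Rightarrow> nat
   \<Rightarrow> (nat \<Rightarrow> 'a) \<Rightarrow> (nat \<Rightarrow> real) \<Rightarrow> (nat \<Rightarrow> nat \<Rightarrow> 'a) \<Rightarrow> (nat \<Rightarrow> nat) \<Rightarrow> bool" where
  "spectral_gradient_run phi g D \<tau> \<sigma> \<gamma>min \<gamma>max m w gam0 wt ij \<longleftrightarrow>
     w 0 \<in> D \<and>
     (\<forall>j. \<gamma>min \<le> gam0 j \<and> gam0 j \<le> \<gamma>max \<and> 1 \<le> ij j \<and>
        (\<forall>i. 1 \<le> i \<and> i \<le> ij j \<longrightarrow>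
             is_global_solution phi g D (w j) (\<tau> ^ (i - 1) * gam0 j) (wt j i)) \<and>
        (\<forall>i. 1 \<le> i \<and> i < ij j \<longrightarrow> \<not> accepted phi g \<sigma> m w j (wt j i)) \<and>
        accepted phi g \<sigma> m w j (wt j (ij j)) \<and>
        w (Suc j) = wt j (ij j))"

end

theory Submission
  imports Defs
begin

text \<open>Comparing the subproblem solution with the base point shows that every step yields the
  sufficient decrease \<open>\<phi>(w\<^sup>j\<^sup>+\<^sup>1) \<le> M\<^sub>j - c \<parallel>w\<^sup>j\<^sup>+\<^sup>1 - w\<^sup>j\<parallel>\<^sup>2\<close>, where \<open>M\<^sub>j\<close> is the maximum of \<open>\<phi>\<close> over
  the last \<open>m+1\<close> iterates. Hence \<open>M\<^sub>j\<close> is nonincreasing, the iterates stay in the level set, and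
  \<open>M\<^sub>j\<close> converges to some \<open>M\<^sub>*\<close>. Every window of \<open>m+1\<close> consecutive indices contains an iterate
  with \<open>\<phi> \<ge> M\<^sub>*\<close>; going backwards from it, the decrease inequality forces each step to be short
  and, by uniform continuity, the previous value of \<open>\<phi>\<close> to be close to \<open>M\<^sub>*\<close> again
  (the argument of Grippo, Lampariello and Lucidi).
  Differentiability of \<open>\<phi>\<close> and closedness of \<open>D\<close> only serve to make the algorithm well defined,
  which the theorem takes for granted.\<close>

definition window_max :: "(nat \<Rightarrow> 'a::linorder) \<Rightarrow> nat \<Rightarrow> nat \<Rightarrow> 'a" where
  "window_max f m j = Max ((\<lambda>r. f (j - r)) ` {0..min j m})"

lemma window_max_0 [simp]: "window_max f m 0 = f 0"
  by (simp add: window_max_def)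

lemma le_window_max: "f j \<le> window_max f m j"
  unfolding window_max_def by (rule Max_ge) (auto intro: image_eqI[of _ _ 0])

lemma window_max_attained: "\<exists>q. j - m \<le> q \<and> q \<le> j \<and> window_max f m j = f q"
proof -
  have "window_max f m j \<in> (\<lambda>r. f (j - r)) ` {0..min j m}"
    unfolding window_max_def by (rule Max_in) auto
  then obtain r where "r \<le> min j m" "window_max f m j = f (j - r)"
    by auto
  then show ?thesis
    by (intro exI[of _ "j - r"]) auto
qed

lemma window_max_Suc_le:
  assumes "f (Suc j) \<le> window_max f m j"
  shows "window_max f m (Suc j) \<le> window_max f m j"
  unfolding window_max_def[of f m "Suc j"]
proof (rule Max.boundedI)
  fix x assume "x \<in> (\<lambda>r. f (Suc j - r)) ` {0..min (Suc j) m}"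
  then obtain r where r: "r \<le> min (Suc j) m" "x = f (Suc j - r)"
    by auto
  show "x \<le> window_max f m j"
  proof (cases r)
    case 0
    then show ?thesis using r assms by simp
  next
    case (Suc r')
    then have "x = f (j - r')" "r' \<le> min j m"
      using r by auto
    then show ?thesis
      unfolding window_max_def by (intro Max_ge) auto
  qed
qed auto

lemma decseq_window_max:
  assumes "\<And>j. f (Suc j) \<le> window_max f m j"
  shows "decseq (window_max f m)"
  by (rule decseq_SucI) (rule window_max_Suc_le[OF assms])

lemma window_max_lower_bound_attained:
  assumes "\<And>j. L \<le> window_max f m j"
  shows "\<exists>q. j < q \<and> q \<le> j + Suc m \<and> L \<le> f q"
proof -
  obtain q where "j + Suc m - m \<le> q" "q \<le> j + Suc m" "window_max f m (j + Suc m) = f q"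
    using window_max_attained by blast
  then show ?thesis
    using assms[of "j + Suc m"] by (intro exI[of _ q]) auto
qed

context
  fixes f d :: "nat \<Rightarrow> real" and c :: real and m :: nat
  assumes c_pos: "0 < c"
    and decrease: "\<And>p. f (Suc p) \<le> window_max f m p - c * (d p)\<^sup>2"
    and d_nonneg: "\<And>p. 0 \<le> d p"
begin

lemma decseq_window_max_of_descent: "decseq (window_max f m)"
proof (rule decseq_window_max)
  fix j
  have "0 \<le> c * (d j)\<^sup>2"
    using c_pos by simp
  then show "f (Suc j) \<le> window_max f m j"
    using decrease[of j] by linarith
qed

lemma descent_le_initial: "f j \<le> f 0"
  using le_window_max[of f j m] decseqD[OF decseq_window_max_of_descent, of 0 j] by simp

context
  fixes Ms :: real
  assumes window_max_tendsto: "window_max f m \<longlonglongrightarrow> Ms"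
    and short_steps_small_change: "\<And>\<epsilon>. 0 < \<epsilon> \<Longrightarrow> \<exists>\<eta>>0. \<forall>p. d p < \<eta> \<longrightarrow> \<bar>f p - f (Suc p)\<bar> < \<epsilon>"
begin

lemma near_limit_backward_step:
  assumes "0 < \<epsilon>"
  shows "\<exists>\<delta>>0. \<forall>\<^sub>F p in sequentially. Ms - \<delta> \<le> f (Suc p) \<longrightarrow> d p < \<epsilon> \<and> Ms - \<epsilon> \<le> f p"
proof -
  obtain \<eta> where \<eta>: "0 < \<eta>" "\<forall>p. d p < \<eta> \<longrightarrow> \<bar>f p - f (Suc p)\<bar> < \<epsilon> / 2"
    using short_steps_small_change[of "\<epsilon> / 2"] assms by auto
  define r where "r = min \<epsilon> \<eta>"
  have r_pos: "0 < r"
    using \<eta>(1) assms by (simp add: r_def)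
  define \<delta> where "\<delta> = min (\<epsilon> / 2) (c * r\<^sup>2 / 4)"
  have \<delta>_pos: "0 < \<delta>"
    using r_pos c_pos assms by (simp add: \<delta>_def)
  have key: "d p < \<epsilon> \<and> Ms - \<epsilon> \<le> f p" if "window_max f m p < Ms + \<delta>" "Ms - \<delta> \<le> f (Suc p)" for p
  proof -
    have "c * (d p)\<^sup>2 \<le> window_max f m p - f (Suc p)"
      using decrease[of p] by linarith
    also have "\<dots> < 2 * \<delta>"
      using that by linarith
    also have "\<dots> \<le> c * r\<^sup>2 / 2"
      by (simp add: \<delta>_def)
    also have "\<dots> < c * r\<^sup>2"
      using c_pos r_pos by simp
    finally have "(d p)\<^sup>2 < r\<^sup>2"
      using c_pos by simp
    then have "d p < r"
      using d_nonneg[of p] r_pos by (simp add: power_less_imp_less_base)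
    then have "d p < \<epsilon>" "\<bar>f p - f (Suc p)\<bar> < \<epsilon> / 2"
      using \<eta>(2) by (auto simp: r_def)
    moreover have "\<delta> \<le> \<epsilon> / 2"
      by (simp add: \<delta>_def)
    ultimately show ?thesis
      using that(2) by linarith
  qed
  have "\<forall>\<^sub>F p in sequentially. window_max f m p < Ms + \<delta>"
    using order_tendstoD(2)[OF window_max_tendsto] \<delta>_pos by simp
  then have "\<forall>\<^sub>F p in sequentially. Ms - \<delta> \<le> f (Suc p) \<longrightarrow> d p < \<epsilon> \<and> Ms - \<epsilon> \<le> f p"
    by (rule eventually_mono) (use key in blast)
  then show ?thesis
    using \<delta>_pos by blast
qed

lemma near_limit_backward:
  assumes "0 < \<epsilon>"
  shows "\<exists>\<delta>>0. \<forall>\<^sub>F p in sequentially. \<forall>k\<le>K.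
           Ms - \<delta> \<le> f (p + k) \<longrightarrow> Ms - \<epsilon> \<le> f p \<and> (\<forall>i<k. d (p + i) < \<epsilon>)"
  using assms
proof (induction K arbitrary: \<epsilon>)
  case 0
  then show ?case by auto
next
  case (Suc K)
  obtain \<delta>\<^sub>1 where \<delta>\<^sub>1: "0 < \<delta>\<^sub>1"
    "\<forall>\<^sub>F p in sequentially. Ms - \<delta>\<^sub>1 \<le> f (Suc p) \<longrightarrow> d p < \<epsilon> \<and> Ms - \<epsilon> \<le> f p"
    using near_limit_backward_step Suc.prems by blast
  obtain \<delta>\<^sub>2 where \<delta>\<^sub>2: "0 < \<delta>\<^sub>2" "\<forall>\<^sub>F p in sequentially. \<forall>k\<le>K. Ms - \<delta>\<^sub>2 \<le> f (p + k) \<longrightarrow>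
      Ms - min \<epsilon> \<delta>\<^sub>1 \<le> f p \<and> (\<forall>i<k. d (p + i) < min \<epsilon> \<delta>\<^sub>1)"
    using Suc.IH[of "min \<epsilon> \<delta>\<^sub>1"] Suc.prems \<delta>\<^sub>1(1) by auto
  have "\<forall>k\<le>Suc K. Ms - min \<epsilon> \<delta>\<^sub>2 \<le> f (p + k) \<longrightarrow> Ms - \<epsilon> \<le> f p \<and> (\<forall>i<k. d (p + i) < \<epsilon>)"
    if step: "Ms - \<delta>\<^sub>1 \<le> f (Suc p) \<longrightarrow> d p < \<epsilon> \<and> Ms - \<epsilon> \<le> f p"
      and later: "\<forall>k\<le>K. Ms - \<delta>\<^sub>2 \<le> f (Suc p + k) \<longrightarrow>
        Ms - min \<epsilon> \<delta>\<^sub>1 \<le> f (Suc p) \<and> (\<forall>i<k. d (Suc p + i) < min \<epsilon> \<delta>\<^sub>1)" for p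
  proof (intro allI impI)
    fix k assume k: "k \<le> Suc K" "Ms - min \<epsilon> \<delta>\<^sub>2 \<le> f (p + k)"
    show "Ms - \<epsilon> \<le> f p \<and> (\<forall>i<k. d (p + i) < \<epsilon>)"
    proof (cases k)
      case 0
      then show ?thesis using k by simp
    next
      case (Suc k')
      then have "Ms - min \<epsilon> \<delta>\<^sub>1 \<le> f (Suc p) \<and> (\<forall>i<k'. d (Suc p + i) < min \<epsilon> \<delta>\<^sub>1)"
        using later k by auto
      moreover from this have "d p < \<epsilon> \<and> Ms - \<epsilon> \<le> f p"
        using step by linarith
      ultimately show ?thesis
        using Suc by (auto simp: less_Suc_eq_0_disj)
    qed
  qed
  then have "\<forall>\<^sub>F p in sequentially. \<forall>k\<le>Suc K.
      Ms - min \<epsilon> \<delta>\<^sub>2 \<le> f (p + k) \<longrightarrow> Ms - \<epsilon> \<le> f p \<and> (\<forall>i<k. d (p + i) < \<epsilon>)"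
    using eventually_conj[OF \<delta>\<^sub>1(2) eventually_sequentially_Suc[THEN iffD2, OF \<delta>\<^sub>2(2)]]
    by (elim eventually_mono) blast
  then show ?case
    using Suc.prems \<delta>\<^sub>2(1) by (intro exI[of _ "min \<epsilon> \<delta>\<^sub>2"]) simp
qed

lemma steps_tendsto_zero_if_windows_reach_limit:
  assumes window: "\<And>j. \<exists>q. j < q \<and> q \<le> j + Suc m \<and> Ms \<le> f q"
  shows "d \<longlonglongrightarrow> 0"
proof (rule order_tendstoI)
  fix a :: real assume "a < 0"
  then show "\<forall>\<^sub>F p in sequentially. a < d p"
    using d_nonneg by (simp add: less_le_trans)
next
  fix a :: real assume "0 < a"
  then obtain \<delta> where "0 < \<delta>" and ev: "\<forall>\<^sub>F p in sequentially. \<forall>k\<le>Suc m.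
      Ms - \<delta> \<le> f (p + k) \<longrightarrow> Ms - a \<le> f p \<and> (\<forall>i<k. d (p + i) < a)"
    using near_limit_backward by blast
  have "d p < a" if "\<forall>k\<le>Suc m. Ms - \<delta> \<le> f (p + k) \<longrightarrow> Ms - a \<le> f p \<and> (\<forall>i<k. d (p + i) < a)" for p
  proof -
    obtain q where q: "p < q" "q \<le> p + Suc m" "Ms \<le> f q"
      using window by blast
    then have "Ms - \<delta> \<le> f (p + (q - p))" "q - p \<le> Suc m"
      using \<open>0 < \<delta>\<close> by auto
    then have "\<forall>i<q - p. d (p + i) < a"
      using that by blast
    then show ?thesis
      using q(1) by (metis add_0_right zero_less_diff)
  qed
  then show "\<forall>\<^sub>F p in sequentially. d p < a"
    by (rule eventually_mono[OF ev])
qed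

end

lemma descent_steps_tendsto_zero:
  assumes "bdd_below (range f)"
    and "\<And>\<epsilon>. 0 < \<epsilon> \<Longrightarrow> \<exists>\<eta>>0. \<forall>p. d p < \<eta> \<longrightarrow> \<bar>f p - f (Suc p)\<bar> < \<epsilon>"
  shows "d \<longlonglongrightarrow> 0"
proof -
  obtain b where b: "\<And>j. b \<le> f j"
    using assms(1) by (auto simp: bdd_below_def)
  have "b \<le> window_max f m j" for j
    using b[of j] le_window_max[of f j m] by linarith
  then have "bdd_below (range (window_max f m))"
    by (rule bdd_belowI2)
  then have tendsto: "window_max f m \<longlonglongrightarrow> (INF j. window_max f m j)"
    using decseq_window_max_of_descent by (rule LIMSEQ_decseq_INF)
  have window: "\<exists>q. j < q \<and> q \<le> j + Suc m \<and> (INF j. window_max f m j) \<le> f q" for j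
    using decseq_ge[OF decseq_window_max_of_descent tendsto] by (rule window_max_lower_bound_attained)
  show ?thesis
    by (rule steps_tendsto_zero_if_windows_reach_limit[OF tendsto assms(2) window])
qed

end

lemma uniformly_continuous_on_short_steps:
  fixes f :: "'a::real_normed_vector \<Rightarrow> real" and x :: "nat \<Rightarrow> 'a"
  assumes "uniformly_continuous_on S f" "\<And>j. x j \<in> S" "0 < \<epsilon>"
  shows "\<exists>\<eta>>0. \<forall>p. norm (x (Suc p) - x p) < \<eta> \<longrightarrow> \<bar>f (x p) - f (x (Suc p))\<bar> < \<epsilon>"
proof -
  obtain \<eta> where "0 < \<eta>" "\<forall>y\<in>S. \<forall>y'\<in>S. dist y' y < \<eta> \<longrightarrow> dist (f y') (f y) < \<epsilon>"
    using assms(1,3) unfolding uniformly_continuous_on_def by blast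
  moreover have "\<bar>f (x p) - f (x (Suc p))\<bar> = dist (f (x (Suc p))) (f (x p))"
    and "norm (x (Suc p) - x p) = dist (x (Suc p)) (x p)" for p
    by (simp_all add: dist_real_def dist_norm)
  ultimately show ?thesis
    using assms(2) by auto
qed

lemma global_solution_inner_le:
  assumes "is_global_solution phi g D u \<gamma> v" "u \<in> D"
  shows "inner (g u) (v - u) \<le> - (\<gamma> / 2) * (norm (v - u))\<^sup>2"
proof -
  have "subproblem_obj phi g u \<gamma> v \<le> subproblem_obj phi g u \<gamma> u"
    using assms unfolding is_global_solution_def by blast
  then show ?thesis
    by (simp add: subproblem_obj_def)
qed

lemma accepted_iff_window_max:
  "accepted phi g \<sigma> m w j v \<longleftrightarrow>
     phi v \<le> window_max (\<lambda>j. phi (w j)) m j + \<sigma> * inner (g (w j)) (v - w j)"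
  by (simp add: accepted_def window_max_def)

context
  fixes phi :: "'a::euclidean_space \<Rightarrow> real" and g :: "'a \<Rightarrow> 'a" and D :: "'a set"
    and \<tau> \<sigma> \<gamma>min \<gamma>max :: real and m :: nat
    and w :: "nat \<Rightarrow> 'a" and gam0 :: "nat \<Rightarrow> real" and wt :: "nat \<Rightarrow> nat \<Rightarrow> 'a" and ij :: "nat \<Rightarrow> nat"
  assumes run: "spectral_gradient_run phi g D \<tau> \<sigma> \<gamma>min \<gamma>max m w gam0 wt ij"
begin

lemma spectral_gradient_run_step:
  shows "\<gamma>min \<le> gam0 j"
    and "is_global_solution phi g D (w j) (\<tau> ^ (ij j - 1) * gam0 j) (w (Suc j))"
    and "accepted phi g \<sigma> m w j (w (Suc j))"
proof -
  have "\<gamma>min \<le> gam0 j" "1 \<le> ij j" "w (Suc j) = wt j (ij j)"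
    and "\<forall>i. 1 \<le> i \<and> i \<le> ij j \<longrightarrow>
           is_global_solution phi g D (w j) (\<tau> ^ (i - 1) * gam0 j) (wt j i)"
    and "accepted phi g \<sigma> m w j (wt j (ij j))"
    using run[unfolded spectral_gradient_run_def, THEN conjunct2, THEN spec[of _ j]] by blast+
  then show "\<gamma>min \<le> gam0 j"
    and "is_global_solution phi g D (w j) (\<tau> ^ (ij j - 1) * gam0 j) (w (Suc j))"
    and "accepted phi g \<sigma> m w j (w (Suc j))"
    by simp_all
qed

lemma spectral_gradient_run_in_D: "w j \<in> D"
proof (cases j)
  case 0
  then show ?thesis using run by (simp add: spectral_gradient_run_def)
next
  case (Suc k)
  then show ?thesis
    using spectral_gradient_run_step(2)[of k] by (simp add: is_global_solution_def)
qed

lemma spectral_gradient_run_sufficient_decrease: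
  assumes "1 \<le> \<tau>" "0 \<le> \<sigma>" "0 \<le> \<gamma>min"
  shows "phi (w (Suc j)) \<le>
           window_max (\<lambda>j. phi (w j)) m j - \<sigma> * \<gamma>min / 2 * (norm (w (Suc j) - w j))\<^sup>2"
proof -
  define \<gamma> where "\<gamma> = \<tau> ^ (ij j - 1) * gam0 j"
  have "\<gamma>min \<le> 1 * gam0 j"
    using spectral_gradient_run_step(1) by simp
  also have "\<dots> \<le> \<gamma>"
    unfolding \<gamma>_def
  proof (rule mult_right_mono)
    show "1 \<le> \<tau> ^ (ij j - 1)"
      using assms(1) by (rule one_le_power)
    show "0 \<le> gam0 j"
      using assms(3) spectral_gradient_run_step(1)[of j] by linarith
  qed
  finally have "\<gamma>min \<le> \<gamma>" .
  have "inner (g (w j)) (w (Suc j) - w j) \<le> - (\<gamma> / 2) * (norm (w (Suc j) - w j))\<^sup>2"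
    using global_solution_inner_le spectral_gradient_run_step(2) spectral_gradient_run_in_D
    unfolding \<gamma>_def by blast
  also have "\<dots> \<le> - (\<gamma>min / 2) * (norm (w (Suc j) - w j))\<^sup>2"
    using \<open>\<gamma>min \<le> \<gamma>\<close> by (simp add: mult_right_mono)
  finally have "\<sigma> * inner (g (w j)) (w (Suc j) - w j) \<le> \<sigma> * (- (\<gamma>min / 2) * (norm (w (Suc j) - w j))\<^sup>2)"
    using assms(2) by (rule mult_left_mono)
  also have "\<dots> = - (\<sigma> * \<gamma>min / 2 * (norm (w (Suc j) - w j))\<^sup>2)"
    by (simp add: algebra_simps)
  finally show ?thesis
    using spectral_gradient_run_step(3)[of j] unfolding accepted_iff_window_max by linarith
qed

end

theorem mainTheorem4:
  fixes phi :: "'a::euclidean_space \<Rightarrow> real" and g :: "'a \<Rightarrow> 'a" and D :: "'a set"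
    and \<tau> \<sigma> \<gamma>min \<gamma>max :: real and m :: nat
    and w :: "nat \<Rightarrow> 'a" and gam0 :: "nat \<Rightarrow> real" and wt :: "nat \<Rightarrow> nat \<Rightarrow> 'a" and ij :: "nat \<Rightarrow> nat"
  assumes "C1_with_gradient phi g"
    and "D \<noteq> {}" and "closed D"
    and "\<tau> > 1" and "0 < \<sigma>" and "\<sigma> < 1" and "0 < \<gamma>min" and "\<gamma>min \<le> \<gamma>max"
    and "spectral_gradient_run phi g D \<tau> \<sigma> \<gamma>min \<gamma>max m w gam0 wt ij"
    and "\<exists>c. \<forall>v\<in>{v\<in>D. phi v \<le> phi (w 0)}. c \<le> phi v"
    and "uniformly_continuous_on {v\<in>D. phi v \<le> phi (w 0)} phi"
  shows "(\<lambda>j. norm (w (Suc j) - w j)) \<longlonglongrightarrow> 0"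
proof -
  define f where "f = (\<lambda>j. phi (w j))"
  define d where "d = (\<lambda>j. norm (w (Suc j) - w j))"
  have descent: "0 < \<sigma> * \<gamma>min / 2"
    "\<And>j. f (Suc j) \<le> window_max f m j - \<sigma> * \<gamma>min / 2 * (d j)\<^sup>2" "\<And>j. 0 \<le> d j"
    using spectral_gradient_run_sufficient_decrease[OF assms(9)] assms(4,5,7)
    by (simp_all add: f_def d_def)
  have level_set: "w j \<in> {v\<in>D. phi v \<le> phi (w 0)}" for j
    using descent_le_initial[OF descent] spectral_gradient_run_in_D[OF assms(9)] by (simp add: f_def)
  obtain c0 where "\<forall>v\<in>{v\<in>D. phi v \<le> phi (w 0)}. c0 \<le> phi v"
    using assms(10) by blast
  then have "bdd_below (range f)"
    using level_set unfolding f_def by (intro bdd_belowI2[where m = c0]) blast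
  moreover have "\<exists>\<eta>>0. \<forall>p. d p < \<eta> \<longrightarrow> \<bar>f p - f (Suc p)\<bar> < \<epsilon>" if "0 < \<epsilon>" for \<epsilon>
    using uniformly_continuous_on_short_steps[OF assms(11) level_set that] unfolding d_def f_def .
  ultimately have "d \<longlonglongrightarrow> 0"
    by (rule descent_steps_tendsto_zero[OF descent])
  then show ?thesis
    unfolding d_def .
qed

end
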